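(* For each integer $m\ge 2$ let $N_m=p_1p_2\cdots p_m$ be the product of the first $m$ primes (so $N_m\ge 6$), and let $H_m=\{0,N_m,2N_m,\dots,(m-1)N_m\}$. Then $\mathfrak{S}(H_m)\to\infty$ as $m\to\infty$.
   Context: For a finite set $H$ of $m$ integers, $\nu_p(H)$ denotes the number of distinct residues modulo $p$ among the elements of $H$. The Selberg (singular series) constant is $$\mathfrak{S}(H)=\prod_{p}\Big(1-\frac{\nu_p(H)}{p}\Big)\Big(1-\frac1p\Big)^{-m},$$ where the product runs over all primes $p$. *)

theory Defs
  imports "HOL-Analysis.Analysis" "HOL-Computational_Algebra.Primes"
begin

definition nu :: "nat \<Rightarrow> int set \<Rightarrow> nat" where
  "nu p H = card ((\<lambda>h. h mod int p) ` H)"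

definition singular_series :: "int set \<Rightarrow> real" where
  "singular_series H =
     prodinf (\<lambda>p::nat. if prime p
        then (1 - real (nu p H) / real p) / (1 - 1 / real p) ^ card H
        else 1)"

text \<open>The i-th prime, 0-indexed: nth_prime 0 = 2.\<close>
definition nth_prime :: "nat \<Rightarrow> nat" where
  "nth_prime i = enumerate {p::nat. prime p} i"

definition primorial_first :: "nat \<Rightarrow> nat" where
  "primorial_first m = (\<Prod>i<m. nth_prime i)"

definition Hm :: "nat \<Rightarrow> int set" where
  "Hm m = (\<lambda>j. int j * int (primorial_first m)) ` {..<m}"

end

theory Submission
  imports Defs
begin

(* For the first m primes p the elements of H_m are all divisible by p, so nu_p(H_m) = 1 and the
   local factor is (p/(p-1))^(m-1) >= 1; the primes 2 and 3 alone contribute 3^(m-1).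
   Every other prime exceeds 2m, so nu_p(H_m) = m and the local factor lies between
   exp(-2m^2/p^2) and 1. Since the sum of 1/n^2 over n > 2m is at most 1/(2m), these
   factors together cost at most exp(-m). Hence S(H_m) >= 3^(m-1) e^(-m), which tends to
   infinity because 3 > e. *)

lemma prime_nth_prime: "prime (nth_prime i)"
  unfolding nth_prime_def using enumerate_in_set[OF primes_infinite] by auto

lemma strict_mono_nth_prime: "strict_mono nth_prime"
  unfolding nth_prime_def strict_mono_def using enumerate_mono[OF _ primes_infinite] by auto

lemma nth_prime_surj: "prime p \<Longrightarrow> \<exists>i. nth_prime i = p"
  unfolding nth_prime_def using enumerate_Ex[OF primes_infinite] by auto

lemma nth_prime_0: "nth_prime 0 = 2"
  unfolding nth_prime_def enumerate_0
  by (rule Least_equality) (auto simp: prime_ge_2_nat)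

lemma nth_prime_1: "nth_prime 1 = 3"
proof -
  have "nth_prime 1 = enumerate ({p::nat. prime p} - {2}) 0"
    using nth_prime_0 by (simp add: nth_prime_def enumerate_Suc')
  also have "\<dots> = 3" unfolding enumerate_0
  proof (rule Least_equality)
    fix q :: nat assume "q \<in> {p. prime p} - {2}"
    then show "3 \<le> q" using prime_ge_2_nat[of q] by force
  qed simp
  finally show ?thesis .
qed

lemma nth_prime_ge: "1 \<le> i \<Longrightarrow> 2 * i + 1 \<le> nth_prime i"
proof (induction i rule: dec_induct)
  case base
  then show ?case using nth_prime_1 by simp
next
  case (step i)
  have "nth_prime i < nth_prime (Suc i)"
    using strict_mono_nth_prime by (simp add: strict_mono_less)
  then have "2 * Suc i \<le> nth_prime (Suc i)"
    using step.IH by simp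
  moreover have "2 < nth_prime (Suc i)"
    using strict_mono_less[OF strict_mono_nth_prime, of 0 "Suc i"] nth_prime_0 by simp
  then have "odd (nth_prime (Suc i))"
    using prime_nth_prime prime_odd_nat by blast
  then have "2 * Suc i \<noteq> nth_prime (Suc i)"
    by (metis dvd_triv_left)
  ultimately have "2 * Suc i < nth_prime (Suc i)"
    by (rule le_neq_trans)
  then show ?case by simp
qed

lemma nth_prime_dvd_primorial_first: "i < m \<Longrightarrow> nth_prime i dvd primorial_first m"
  unfolding primorial_first_def by (rule dvd_prodI) auto

lemma primorial_first_pos: "0 < primorial_first m"
  unfolding primorial_first_def using prime_nth_prime prime_gt_0_nat by (simp add: prod_pos)

lemma nth_prime_le_if_not_dvd_primorial_first:
  assumes "prime p" "\<not> p dvd primorial_first m"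
  shows "nth_prime m \<le> p"
proof -
  obtain i where i: "nth_prime i = p" using nth_prime_surj assms(1) by blast
  then have "m \<le> i"
    using nth_prime_dvd_primorial_first[of i m] assms(2) by (metis not_le)
  then show ?thesis using i strict_mono_less_eq[OF strict_mono_nth_prime] by blast
qed

lemma prime_not_dvd_primorial_first_gt:
  assumes "prime p" "\<not> p dvd primorial_first m"
  shows "2 * m < p"
proof (cases "m = 0")
  case False
  then show ?thesis
    using nth_prime_ge[of m] nth_prime_le_if_not_dvd_primorial_first[OF assms] by simp
qed (use assms prime_gt_0_nat in simp)

lemma card_multiples:
  assumes "d \<noteq> 0"
  shows "card ((\<lambda>j. int j * d) ` {..<m}) = m"
proof -
  have "inj_on (\<lambda>j. int j * d) {..<m}" using assms by (auto simp: inj_on_def)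
  then show ?thesis by (simp add: card_image)
qed

lemma nu_multiples_of_divisor:
  assumes "int p dvd d" "0 < m"
  shows "nu p ((\<lambda>j. int j * d) ` {..<m}) = 1"
proof -
  have "0 \<in> (\<lambda>j. int j * d) ` {..<m}"
    using assms(2) image_eqI[of 0 "\<lambda>j. int j * d" 0] by simp
  moreover have "h mod int p = 0" if "h \<in> (\<lambda>j. int j * d) ` {..<m}" for h
    using that assms(1) by auto
  ultimately have "(\<lambda>h. h mod int p) ` (\<lambda>j. int j * d) ` {..<m} = {0}"
    by (auto intro!: rev_image_eqI[of 0])
  then show ?thesis unfolding nu_def by simp
qed

lemma nu_multiples_coprime:
  assumes p: "prime p" "\<not> int p dvd d" and m: "m \<le> p"
  shows "nu p ((\<lambda>j. int j * d) ` {..<m}) = m"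
proof -
  have "inj_on (\<lambda>h. h mod int p) ((\<lambda>j. int j * d) ` {..<m})"
  proof (rule inj_onI, clarify)
    fix i j assume ij: "i < m" "j < m" and "int i * d mod int p = int j * d mod int p"
    then have "int p dvd (int i - int j) * d" by (simp add: mod_eq_dvd_iff left_diff_distrib)
    then have dvd: "int p dvd int i - int j" using p by (simp add: prime_dvd_mult_iff)
    have "int i - int j = 0"
    proof (rule ccontr)
      assume "int i - int j \<noteq> 0"
      then have "int p \<le> \<bar>int i - int j\<bar>" using dvd_imp_le_int[OF _ dvd] by simp
      then show False using ij m by linarith
    qed
    then show "int i * d = int j * d" by simp
  qed
  moreover have "d \<noteq> 0" using p by auto
  ultimately show ?thesis unfolding nu_def by (simp add: card_image card_multiples)
qed

lemma exp_neg_two_mult_le_one_minus: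
  fixes y :: real
  assumes "0 \<le> y" "y \<le> 1/2"
  shows "exp (-2 * y) \<le> 1 - y"
proof -
  have "-2 * y \<le> - y - 2 * y\<^sup>2"
    using assms mult_left_mono[of "2 * y" 1 y] by (simp add: power2_eq_square)
  also have "\<dots> \<le> ln (1 - y)" using assms by (rule ln_one_minus_pos_lower_bound)
  finally show ?thesis using assms by (simp add: ln_ge_iff)
qed

lemma local_factor_le_one:
  fixes q :: real
  assumes "1 < q"
  shows "(1 - m / q) / (1 - 1 / q) ^ m \<le> 1"
proof -
  have "1 + m * (- 1 / q) \<le> (1 + (- 1 / q)) ^ m"
    using assms by (intro Bernoulli_inequality) simp
  then show ?thesis using assms by simp
qed

lemma local_factor_ge_exp:
  fixes q :: real
  assumes q: "1 < q" "2 * m < q"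
  shows "exp (-2 * m\<^sup>2 / q\<^sup>2) \<le> (1 - m / q) / (1 - 1 / q) ^ m"
proof -
  have "0 \<le> 1 / (q - 1)" using q by simp
  then have "1 + m * (1 / (q - 1)) \<le> (1 + 1 / (q - 1)) ^ m"
    by (intro Bernoulli_inequality) linarith
  moreover have "1 + 1 / (q - 1) = inverse (1 - 1 / q)" using q by (simp add: field_simps)
  moreover have "m / q \<le> m / (q - 1)" using q by (intro divide_left_mono) auto
  ultimately have "1 + m / q \<le> inverse ((1 - 1 / q) ^ m)"
    by (simp add: power_inverse)
  then have "(1 - m / q) * (1 + m / q) \<le> (1 - m / q) * inverse ((1 - 1 / q) ^ m)"
    using q by (intro mult_left_mono) (auto simp: field_simps)
  then have "1 - (m / q)\<^sup>2 \<le> (1 - m / q) / (1 - 1 / q) ^ m"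
    by (simp add: power2_eq_square algebra_simps divide_inverse)
  moreover have "exp (-2 * (m / q)\<^sup>2) \<le> 1 - (m / q)\<^sup>2"
  proof (rule exp_neg_two_mult_le_one_minus)
    have "(m / q)\<^sup>2 \<le> (1/2)\<^sup>2" using q by (intro power_mono) (auto simp: field_simps)
    then show "(m / q)\<^sup>2 \<le> 1/2" by (rule order_trans) (simp add: power2_eq_square)
  qed simp
  ultimately show ?thesis by (simp add: power_divide)
qed

lemma sum_inverse_squares_greaterThanAtMost_le:
  assumes "0 < k"
  shows "(\<Sum>i\<in>{k<..n}. 1 / (real i)\<^sup>2) \<le> 1 / k"
proof (cases "k \<le> n")
  case True
  have "(\<Sum>i\<in>{k<..n}. 1 / (real i)\<^sup>2) \<le> 1 / k - 1 / n"
    using True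
  proof (induction n rule: dec_induct)
    case (step n)
    have n: "0 < real n" using assms step.hyps by simp
    have "1 / (real (Suc n))\<^sup>2 \<le> 1 / (real n * real (Suc n))"
      using n by (intro divide_left_mono mult_pos_pos) (auto simp: power2_eq_square)
    also have "\<dots> = 1 / n - 1 / Suc n" using n by (simp add: field_simps)
    finally have "1 / (real (Suc n))\<^sup>2 \<le> 1 / n - 1 / Suc n" .
    moreover have "{k<..Suc n} = insert (Suc n) {k<..n}" using step.hyps by auto
    ultimately show ?case using step.IH by simp
  qed simp
  then show ?thesis by (rule order_trans) simp
qed simp

lemma convergent_prod_le_one_bounded_below:
  fixes f :: "nat \<Rightarrow> real"
  assumes pos: "\<And>n. 0 < f n" and le1: "\<And>n. f n \<le> 1"
    and b: "0 < b" "\<And>n. b \<le> (\<Prod>i\<le>n. f i)"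
  shows "convergent_prod f" "b \<le> prodinf f"
proof -
  have inverse_le: "(\<Prod>i<n. inverse (f i)) \<le> inverse b" for n
  proof -
    have "(\<Prod>i\<le>n. f i) \<le> (\<Prod>i<n. f i)"
      using pos le1 by (simp add: lessThan_Suc_atMost[symmetric] mult_left_le prod_nonneg less_imp_le)
    then have "b \<le> (\<Prod>i<n. f i)" using b(2) order_trans by blast
    then have "inverse (\<Prod>i<n. f i) \<le> inverse b" using b(1) by (rule le_imp_inverse_le)
    then show ?thesis using prod_inversef[of f "{..<n}"] by (simp add: o_def)
  qed
  have "1 \<le> inverse (f n)" for n using pos le1 by (simp add: one_le_inverse)
  then have "convergent_prod (\<lambda>n. inverse (f n))"
    using inverse_le by (rule convergent_prodI_nonneg_bounded)
  then show conv: "convergent_prod f" by (simp only: convergent_prod_inverse_iff)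
  show "b \<le> prodinf f"
    by (rule LIMSEQ_le_const[OF convergent_prod_LIMSEQ[OF conv]]) (use b(2) in auto)
qed

definition small_primes_factor :: "nat \<Rightarrow> nat \<Rightarrow> real" where
  "small_primes_factor m p =
     (if prime p \<and> p dvd primorial_first m then (real p / (real p - 1)) ^ (m - 1) else 1)"

definition large_primes_factor :: "nat \<Rightarrow> nat \<Rightarrow> real" where
  "large_primes_factor m p =
     (if prime p \<and> \<not> p dvd primorial_first m then (1 - m / real p) / (1 - 1 / real p) ^ m else 1)"

lemma singular_series_Hm_eq:
  assumes m: "0 < m"
  shows "singular_series (Hm m) = (\<Prod>p. small_primes_factor m p * large_primes_factor m p)"
  unfolding singular_series_def
proof (rule prodinf_cong)
  fix p :: nat
  let ?N = "primorial_first m"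
  have card: "card (Hm m) = m"
    unfolding Hm_def using primorial_first_pos[of m] by (simp add: card_multiples)
  show "(if prime p then (1 - nu p (Hm m) / real p) / (1 - 1 / real p) ^ card (Hm m) else 1) =
      small_primes_factor m p * large_primes_factor m p"
  proof (cases "prime p")
    case prime: True
    then have p: "1 < real p" using prime_gt_1_nat[OF prime] by simp
    show ?thesis
    proof (cases "p dvd ?N")
      case True
      then have "nu p (Hm m) = 1"
        unfolding Hm_def using m by (intro nu_multiples_of_divisor) simp_all
      moreover have "(1 - 1 / real p) / (1 - 1 / real p) ^ m = (real p / (real p - 1)) ^ (m - 1)"
        using p m by (cases m) (simp_all add: field_simps)
      ultimately show ?thesis
        using prime True card unfolding small_primes_factor_def large_primes_factor_def by simp
    next
      case False
      then have "nu p (Hm m) = m"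
        unfolding Hm_def using prime_not_dvd_primorial_first_gt[OF prime False] prime
        by (intro nu_multiples_coprime) simp_all
      then show ?thesis
        using prime False card unfolding small_primes_factor_def large_primes_factor_def by simp
    qed
  qed (simp add: small_primes_factor_def large_primes_factor_def)
qed

lemma small_primes_factor_ge_one: "1 \<le> small_primes_factor m p"
proof (cases "prime p")
  case True
  then have "1 < real p" using prime_gt_1_nat by simp
  then have "1 \<le> real p / (real p - 1)" by simp
  then show ?thesis unfolding small_primes_factor_def by simp
qed (simp add: small_primes_factor_def)

lemma small_primes_factor_prodinf:
  assumes m: "2 \<le> m"
  shows "convergent_prod (small_primes_factor m)"
    and "3 ^ (m - 1) \<le> prodinf (small_primes_factor m)"
proof -
  let ?N = "primorial_first m"
  have "small_primes_factor m p = 1" if "p \<notin> {..?N}" for p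
    using that dvd_imp_le[OF _ primorial_first_pos[of m], of p]
    unfolding small_primes_factor_def by auto
  then show conv: "convergent_prod (small_primes_factor m)"
    by (intro convergent_prod_finite[of "{..?N}"]) auto
  have "nth_prime 0 dvd ?N" "nth_prime 1 dvd ?N"
    using m by (simp_all add: nth_prime_dvd_primorial_first)
  then have "2 dvd ?N" "3 dvd ?N" unfolding nth_prime_0 nth_prime_1 .
  then have "small_primes_factor m 2 = 2 ^ (m - 1)" "small_primes_factor m 3 = (3/2) ^ (m - 1)"
    unfolding small_primes_factor_def by simp_all
  moreover have "{..<4::nat} = {0, 1, 2, 3}" by auto
  ultimately have "(\<Prod>p<4. small_primes_factor m p) = 3 ^ (m - 1)"
    by (simp add: small_primes_factor_def power_mult_distrib[symmetric])
  moreover have "(\<Prod>p<4. small_primes_factor m p) \<le> prodinf (small_primes_factor m)"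
    using conv small_primes_factor_ge_one order_trans[OF zero_le_one]
    by (intro prod_le_prodinf) auto
  ultimately show "3 ^ (m - 1) \<le> prodinf (small_primes_factor m)" by simp
qed

lemma large_primes_factor_eq_one: "p \<le> 2 * m \<Longrightarrow> large_primes_factor m p = 1"
  unfolding large_primes_factor_def using prime_not_dvd_primorial_first_gt[of p m] by auto

lemma large_primes_factor_le_one: "large_primes_factor m p \<le> 1"
  unfolding large_primes_factor_def using prime_gt_1_nat[of p]
  by (auto intro: local_factor_le_one)

lemma large_primes_factor_ge_exp: "exp (-2 * (real m)\<^sup>2 / (real p)\<^sup>2) \<le> large_primes_factor m p"
proof (cases "prime p \<and> \<not> p dvd primorial_first m")
  case True
  then have "1 < real p" "2 * real m < real p"
    using prime_gt_1_nat prime_not_dvd_primorial_first_gt[of p m] by auto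
  then have "exp (-2 * (real m)\<^sup>2 / (real p)\<^sup>2) \<le> (1 - m / real p) / (1 - 1 / real p) ^ m"
    by (rule local_factor_ge_exp)
  then show ?thesis using True unfolding large_primes_factor_def by simp
next
  case False
  then have "large_primes_factor m p = 1"
    unfolding large_primes_factor_def by (rule if_not_P)
  moreover have "-2 * (real m)\<^sup>2 / (real p)\<^sup>2 \<le> 0" by (simp add: divide_nonpos_nonneg)
  ultimately show ?thesis by simp
qed

lemma large_primes_factor_pos: "0 < large_primes_factor m p"
  using large_primes_factor_ge_exp exp_gt_zero order_less_le_trans by blast

lemma prod_large_primes_factor_ge:
  assumes m: "0 < m"
  shows "exp (- real m) \<le> (\<Prod>p\<le>n. large_primes_factor m p)"
proof -
  have "2 * (real m)\<^sup>2 * (\<Sum>p\<in>{2*m<..n}. 1 / (real p)\<^sup>2) \<le>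
      2 * (real m)\<^sup>2 * (1 / real (2 * m))"
    using m by (intro mult_left_mono sum_inverse_squares_greaterThanAtMost_le) auto
  also have "\<dots> = m" using m by (simp add: power2_eq_square)
  finally have "exp (- real m) \<le> exp (- (2 * (real m)\<^sup>2 * (\<Sum>p\<in>{2*m<..n}. 1 / (real p)\<^sup>2)))"
    by simp
  also have "\<dots> = (\<Prod>p\<in>{2*m<..n}. exp (-2 * (real m)\<^sup>2 / (real p)\<^sup>2))"
    by (simp add: exp_sum[symmetric] sum_distrib_left sum_negf[symmetric])
  also have "\<dots> \<le> (\<Prod>p\<in>{2*m<..n}. large_primes_factor m p)"
    by (intro prod_mono conjI large_primes_factor_ge_exp) simp
  also have "\<dots> = (\<Prod>p\<le>n. large_primes_factor m p)"
    by (intro prod.mono_neutral_left) (auto simp: large_primes_factor_eq_one)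
  finally show ?thesis .
qed

lemma large_primes_factor_prodinf:
  assumes "0 < m"
  shows "convergent_prod (large_primes_factor m)"
    and "exp (- real m) \<le> prodinf (large_primes_factor m)"
  using large_primes_factor_pos large_primes_factor_le_one exp_gt_zero
    prod_large_primes_factor_ge[OF assms]
  by (rule convergent_prod_le_one_bounded_below)+

lemma singular_series_Hm_ge:
  assumes m: "2 \<le> m"
  shows "3 ^ (m - 1) * exp (- real m) \<le> singular_series (Hm m)"
proof -
  note small = small_primes_factor_prodinf[OF m]
  note large = large_primes_factor_prodinf[of m]
  have "(0::real) \<le> 3 ^ (m - 1)" by simp
  moreover have "0 \<le> prodinf (small_primes_factor m)"
    using order_trans[OF _ small(2)] by simp
  ultimately have "3 ^ (m - 1) * exp (- real m) \<le>
      prodinf (small_primes_factor m) * prodinf (large_primes_factor m)"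
    using small large m by (intro mult_mono) auto
  also have "\<dots> = singular_series (Hm m)"
    using small large m by (simp add: singular_series_Hm_eq prodinf_mult)
  finally show ?thesis .
qed

lemma three_pow_mult_exp_neg_tendsto_at_top:
  "filterlim (\<lambda>m::nat. 3 ^ (m - 1) * exp (- real m) :: real) at_top sequentially"
proof -
  have "1 < 3 / exp (1::real)" using e_less_272 by simp
  then have "filterlim (\<lambda>m::nat. (3 / exp 1) ^ m :: real) at_top sequentially"
    by (intro filterlim_at_infinity_imp_filterlim_at_top filterlim_realpow_sequentially_gt1)
      (auto intro: always_eventually)
  then have lim: "filterlim (\<lambda>m::nat. (3 / exp 1) ^ m * (1 / 3) :: real) at_top sequentially"
    by (rule filterlim_at_top_mult_tendsto_pos[OF tendsto_const, rotated]) simp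
  have eq: "(3 / exp 1) ^ m * (1 / 3) = 3 ^ (m - 1) * exp (- real m)" if "1 \<le> m" for m :: nat
  proof -
    have "exp (- real m) = (1 / exp 1) ^ m"
      by (simp add: exp_of_nat_mult[symmetric] exp_minus inverse_eq_divide power_one_over)
    moreover have "(3::real) ^ m = 3 * 3 ^ (m - 1)" using that by (cases m) simp_all
    ultimately show ?thesis by (simp add: power_divide)
  qed
  have "\<forall>\<^sub>F m in sequentially. (3 / exp 1) ^ m * (1 / 3) = 3 ^ (m - 1) * exp (- real m)"
    using eventually_ge_at_top[of 1] by eventually_elim (rule eq)
  with lim show ?thesis by (rule filterlim_cong[OF refl refl, THEN iffD1, rotated])
qed

theorem mainTheorem2:
  shows "filterlim (\<lambda>m. singular_series (Hm m)) at_top sequentially"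
proof (rule filterlim_at_top_mono[OF three_pow_mult_exp_neg_tendsto_at_top])
  show "\<forall>\<^sub>F m in sequentially. 3 ^ (m - 1) * exp (- real m) \<le> singular_series (Hm m)"
    using eventually_ge_at_top[of 2] by eventually_elim (rule singular_series_Hm_ge)
qed

end
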